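(* Let $\Omega\subseteq\mathbb{R}^n$ be open and $u:\Omega\to\mathbb{R}^N$ continuous. (1) Let $F:\Omega\times\mathbb{R}^N\times\mathbb{R}^{N\times n}\times(\mathbb{R}^N\otimes\mathbb{R}^{n\times n}_s)\to\mathbb{R}^N$ be locally bounded. Then $u$ is a contact solution of $F(\cdot,u,Du,D^2u)=0$ on $\Omega$ if and only if for every $x\in\Omega$, $\xi\in\mathbb{S}^{N-1}$ and $(P,\mathbf{X})\in J^{2,\xi}u(x)$ one has $\xi^*F(x,u(x),P,\mathbf{X})\ge0$. (2) Let $F:\Omega\times\mathbb{R}^N\times\mathbb{R}^{N\times n}\to\mathbb{R}^N$ be locally bounded. Then $u$ is a contact solution of $F(\cdot,u,Du)=0$ on $\Omega$ if and only if for every $x\in\Omega$, $\xi\in\mathbb{S}^{N-1}$ and $P\in J^{1,\xi}u(x)$ one has $\xi^*F(x,u(x),P)\ge0$. If moreover $F$ is continuous, then in both characterisations $\xi^*F$ may be replaced by $\xi^\top F$.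
   Context: $\mathbb{R}^N\otimes\mathbb{R}^{n\times n}_s$: arrays $\mathbf{X}=(\mathbf{X}_{\alpha ij})$ symmetric in $i,j$; $\mathbf{X}:z\otimes z$ has components $\sum_{ij}\mathbf{X}_{\alpha ij}z_iz_j$. For $a,b\in\mathbb{R}^N$, $a\vee b:=\frac12(a\otimes b+b\otimes a)$; matrix inequalities in the sense of quadratic forms. Contact jets: $J^{1,\xi}u(x)$ is the set of $P\in\mathbb{R}^{N\times n}$ for which there is a continuous $T:\mathbb{R}^n\setminus\{0\}\to\mathbb{R}^{N\times N}_s$ with $|T(y)|\to0$ as $y\to0$ and $\xi\vee[u(z)-u(x)-P(z-x)]\le|z-x|T(z-x)$ for $z\ne x$ near $x$; $J^{2,\xi}u(x)$ is the set of $(P,\mathbf{X})$ with such a $T$ and $\xi\vee[u(z)-u(x)-P(z-x)-\frac12\mathbf{X}:(z-x)\otimes(z-x)]\le|z-x|^2T(z-x)$ for $z\ne x$ near $x$. Closures: $\bar J^{1,\xi}u(x)$ is the set of $P$ for which there are $\xi_m\in\mathbb{S}^{N-1}$, $x_m\in\Omega$, $P_m\in J^{1,\xi_m}u(x_m)$ with $(\xi_m,x_m,P_m)\to(\xi,x,P)$; $\bar J^{2,\xi}u(x)$ is defined analogously with $(P_m,\mathbf{X}_m)\in J^{2,\xi_m}u(x_m)$ converging to $(P,\mathbf{X})$. $\xi$-envelope: $\xi^*F$ is the upper semicontinuous envelope of $\xi^\top F$, i.e. $\xi^*F(p):=\limsup_{\varepsilon\to0}\sup\{\xi^\top F(q):|p-q|\le\varepsilon\}$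 where $p,q$ denote the full argument tuples. Contact solutions: $u$ is a contact solution of $F(\cdot,u,Du,D^2u)=0$ if for all $x\in\Omega$, $\xi\in\mathbb{S}^{N-1}$, $(P,\mathbf{X})\in\bar J^{2,\xi}u(x)$ we have $\xi^*F(x,u(x),P,\mathbf{X})\ge0$; $u$ is a contact solution of $F(\cdot,u,Du)=0$ if for all $x,\xi$ and $P\in\bar J^{1,\xi}u(x)$ we have $\xi^*F(x,u(x),P)\ge0$. *)

theory Defs
  imports "HOL-Analysis.Analysis"
begin

text \<open>Dimensions n and N are finite index types 'n, 'N.
  Vectors in R^n: real^'n; u : Omega -> R^N is a total function real^'n => real^'N
  used only on Omega.  P in R^(N x n): real^'n^'N (row alpha is P$alpha), so P(z-x) = P *v (z-x).
  X in R^N (x) R^(n x n)_s: real^'n^'n^'N with X$alpha$i$j, symmetric in i,j.\<close>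

definition symX :: "real^'n^'n^'N \<Rightarrow> bool" where
  "symX X \<longleftrightarrow> (\<forall>\<alpha>. transpose (X $ \<alpha>) = X $ \<alpha>)"

definition quadX :: "real^'n^'n^'N \<Rightarrow> real^'n \<Rightarrow> real^'N" where
  "quadX X z = (\<chi> \<alpha>. \<Sum>i\<in>UNIV. \<Sum>j\<in>UNIV. X $ \<alpha> $ i $ j * z $ i * z $ j)"

definition vee :: "real^'N \<Rightarrow> real^'N \<Rightarrow> real^'N^'N" where
  "vee a b = (\<chi> i j. (a $ i * b $ j + b $ i * a $ j) / 2)"

definition mat_le :: "real^'N^'N \<Rightarrow> real^'N^'N \<Rightarrow> bool" where
  "mat_le A B \<longleftrightarrow> (\<forall>v. v \<bullet> (A *v v) \<le> v \<bullet> (B *v v))"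

definition admT :: "(real^'n \<Rightarrow> real^'N^'N) \<Rightarrow> bool" where
  "admT T \<longleftrightarrow> continuous_on (- {0}) T \<and> (\<forall>y. y \<noteq> 0 \<longrightarrow> transpose (T y) = T y)
      \<and> (T \<longlongrightarrow> 0) (at 0)"

definition J1 :: "(real^'n) set \<Rightarrow> (real^'n \<Rightarrow> real^'N) \<Rightarrow> real^'N \<Rightarrow> real^'n \<Rightarrow> (real^'n^'N) set" where
  "J1 \<Omega> u \<xi> x = {P. \<exists>T. admT T \<and> (\<exists>r>0. \<forall>z\<in>\<Omega>. 0 < dist z x \<and> dist z x < r \<longrightarrow>
      mat_le (vee \<xi> (u z - u x - P *v (z - x))) (norm (z - x) *\<^sub>R T (z - x)))}"

definition J2 :: "(real^'n) set \<Rightarrow> (real^'n \<Rightarrow> real^'N) \<Rightarrow> real^'N \<Rightarrow> real^'n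
    \<Rightarrow> ((real^'n^'N) \<times> (real^'n^'n^'N)) set" where
  "J2 \<Omega> u \<xi> x = {(P, X). symX X \<and> (\<exists>T. admT T \<and> (\<exists>r>0. \<forall>z\<in>\<Omega>. 0 < dist z x \<and> dist z x < r \<longrightarrow>
      mat_le (vee \<xi> (u z - u x - P *v (z - x) - (1/2) *\<^sub>R quadX X (z - x)))
             ((norm (z - x))\<^sup>2 *\<^sub>R T (z - x))))}"

definition J1bar :: "(real^'n) set \<Rightarrow> (real^'n \<Rightarrow> real^'N) \<Rightarrow> real^'N \<Rightarrow> real^'n \<Rightarrow> (real^'n^'N) set" where
  "J1bar \<Omega> u \<xi> x = {P. \<exists>\<xi>s xs Ps. (\<forall>m. \<xi>s m \<in> sphere 0 1 \<and> xs m \<in> \<Omega> \<and> Ps m \<in> J1 \<Omega> u (\<xi>s m) (xs m))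
      \<and> \<xi>s \<longlonglongrightarrow> \<xi> \<and> xs \<longlonglongrightarrow> x \<and> Ps \<longlonglongrightarrow> P}"

definition J2bar :: "(real^'n) set \<Rightarrow> (real^'n \<Rightarrow> real^'N) \<Rightarrow> real^'N \<Rightarrow> real^'n
    \<Rightarrow> ((real^'n^'N) \<times> (real^'n^'n^'N)) set" where
  "J2bar \<Omega> u \<xi> x = {(P, X). \<exists>\<xi>s xs Ps Xs. (\<forall>m. \<xi>s m \<in> sphere 0 1 \<and> xs m \<in> \<Omega> \<and> (Ps m, Xs m) \<in> J2 \<Omega> u (\<xi>s m) (xs m))
      \<and> \<xi>s \<longlonglongrightarrow> \<xi> \<and> xs \<longlonglongrightarrow> x \<and> Ps \<longlonglongrightarrow> P \<and> Xs \<longlonglongrightarrow> X}"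

text \<open>Upper semicontinuous envelope of xi^T G on the domain D (the limsup as eps -> 0 of the
  sup over the closed eps-ball, a decreasing function of eps, hence an infimum), in ereal.\<close>
definition usc_env :: "'a::metric_space set \<Rightarrow> ('a \<Rightarrow> real^'N) \<Rightarrow> real^'N \<Rightarrow> 'a \<Rightarrow> ereal" where
  "usc_env D G \<xi> p = (INF \<epsilon>\<in>{0<..}. SUP q\<in>D \<inter> cball p \<epsilon>. ereal (\<xi> \<bullet> G q))"

definition locally_bounded :: "'a::metric_space set \<Rightarrow> ('a \<Rightarrow> 'b::real_normed_vector) \<Rightarrow> bool" where
  "locally_bounded D G \<longleftrightarrow> (\<forall>p\<in>D. \<exists>e>0. bounded (G ` (D \<inter> ball p e)))"

definition D2 :: "(real^'n) set \<Rightarrow> ((real^'n) \<times> (real^'N) \<times> (real^'n^'N) \<times> (real^'n^'n^'N)) set" where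
  "D2 \<Omega> = {(x, r, P, X). x \<in> \<Omega> \<and> symX X}"

definition G2 :: "(real^'n \<Rightarrow> real^'N \<Rightarrow> real^'n^'N \<Rightarrow> real^'n^'n^'N \<Rightarrow> real^'N)
    \<Rightarrow> ((real^'n) \<times> (real^'N) \<times> (real^'n^'N) \<times> (real^'n^'n^'N)) \<Rightarrow> real^'N" where
  "G2 F = (\<lambda>(x, r, P, X). F x r P X)"

definition D1 :: "(real^'n) set \<Rightarrow> ((real^'n) \<times> (real^'N) \<times> (real^'n^'N)) set" where
  "D1 \<Omega> = {(x, r, P). x \<in> \<Omega>}"

definition G1 :: "(real^'n \<Rightarrow> real^'N \<Rightarrow> real^'n^'N \<Rightarrow> real^'N)
    \<Rightarrow> ((real^'n) \<times> (real^'N) \<times> (real^'n^'N)) \<Rightarrow> real^'N" where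
  "G1 F = (\<lambda>(x, r, P). F x r P)"

definition contact_sol2 :: "(real^'n) set \<Rightarrow> (real^'n \<Rightarrow> real^'N)
    \<Rightarrow> (real^'n \<Rightarrow> real^'N \<Rightarrow> real^'n^'N \<Rightarrow> real^'n^'n^'N \<Rightarrow> real^'N) \<Rightarrow> bool" where
  "contact_sol2 \<Omega> u F \<longleftrightarrow> (\<forall>x\<in>\<Omega>. \<forall>\<xi>\<in>sphere 0 1. \<forall>(P, X)\<in>J2bar \<Omega> u \<xi> x.
      usc_env (D2 \<Omega>) (G2 F) \<xi> (x, u x, P, X) \<ge> 0)"

definition contact_sol1 :: "(real^'n) set \<Rightarrow> (real^'n \<Rightarrow> real^'N)
    \<Rightarrow> (real^'n \<Rightarrow> real^'N \<Rightarrow> real^'n^'N \<Rightarrow> real^'N) \<Rightarrow> bool" where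
  "contact_sol1 \<Omega> u F \<longleftrightarrow> (\<forall>x\<in>\<Omega>. \<forall>\<xi>\<in>sphere 0 1. \<forall>P\<in>J1bar \<Omega> u \<xi> x.
      usc_env (D1 \<Omega>) (G1 F) \<xi> (x, u x, P) \<ge> 0)"

end

theory Submission
  imports Defs
begin

text \<open>Restricting the test from the closed jets to the jets themselves can only weaken the
  condition. Conversely, a closed jet is a limit of jets at nearby points in nearby directions;
  by continuity of u the arguments (x, u x, P, X) converge as well. Where |F| \<le> B, replacing
  the direction \<xi> by \<eta> moves every sup of \<xi> \<bullet> F by at most B |\<eta> - \<xi>|, so local boundedness
  makes the envelope upper semicontinuous jointly in the direction and the argument, and the
  inequality survives the limit. For continuous F the envelope is F itself.\<close>

lemma closed_symX: "closed {X. symX X}"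
proof -
  have "{X. symX X} = (\<Inter>a. \<Inter>i. \<Inter>j. {X. X $ a $ i $ j = X $ a $ j $ i})"
    by (auto simp: symX_def transpose_def vec_eq_iff)
  also have "closed \<dots>"
    by (intro closed_INT ballI closed_Collect_eq continuous_intros)
  finally show ?thesis .
qed

lemma usc_env_eq_of_continuous:
  fixes G :: "'a::metric_space \<Rightarrow> real^'N"
  assumes cont: "continuous (at p within D) G" and "p \<in> D"
  shows "usc_env D G \<xi> p = ereal (\<xi> \<bullet> G p)"
proof (rule antisym)
  show "ereal (\<xi> \<bullet> G p) \<le> usc_env D G \<xi> p"
    unfolding usc_env_def using \<open>p \<in> D\<close> by (auto intro!: INF_greatest SUP_upper2[of p])
next
  show "usc_env D G \<xi> p \<le> ereal (\<xi> \<bullet> G p)"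
  proof (rule ereal_le_epsilon2)
    fix d :: real assume "0 < d"
    have "continuous (at p within D) (\<lambda>q. \<xi> \<bullet> G q)"
      using cont by (intro continuous_intros)
    then obtain r where "r > 0" and r: "\<And>q. q \<in> D \<Longrightarrow> dist q p < r \<Longrightarrow> dist (\<xi> \<bullet> G q) (\<xi> \<bullet> G p) < d"
      using \<open>0 < d\<close> unfolding continuous_within_eps_delta by metis
    have "usc_env D G \<xi> p \<le> (SUP q\<in>D \<inter> cball p (r/2). ereal (\<xi> \<bullet> G q))"
      unfolding usc_env_def using \<open>r > 0\<close> by (intro INF_lower) simp
    also have "\<dots> \<le> ereal (\<xi> \<bullet> G p) + ereal d"
    proof (rule SUP_least)
      fix q assume "q \<in> D \<inter> cball p (r/2)"
      then have "dist (\<xi> \<bullet> G q) (\<xi> \<bullet> G p) < d"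
        using \<open>r > 0\<close> by (intro r) (auto simp: dist_commute)
      then show "ereal (\<xi> \<bullet> G q) \<le> ereal (\<xi> \<bullet> G p) + ereal d"
        by (simp add: dist_real_def)
    qed
    finally show "usc_env D G \<xi> p \<le> ereal (\<xi> \<bullet> G p) + ereal d" .
  qed
qed

lemma SUP_inner_le_perturbed:
  fixes G :: "'a \<Rightarrow> 'b::real_inner"
  assumes "\<And>q. q \<in> S \<Longrightarrow> norm (G q) \<le> B"
  shows "(SUP q\<in>S. ereal (\<eta> \<bullet> G q)) \<le> (SUP q\<in>S. ereal (\<xi> \<bullet> G q)) + ereal (norm (\<eta> - \<xi>) * B)"
proof (rule SUP_least)
  fix q assume "q \<in> S"
  have "\<eta> \<bullet> G q = \<xi> \<bullet> G q + (\<eta> - \<xi>) \<bullet> G q"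
    by (simp add: inner_diff_left)
  also have "\<dots> \<le> \<xi> \<bullet> G q + norm (\<eta> - \<xi>) * B"
    using assms[OF \<open>q \<in> S\<close>]
    by (intro add_left_mono order_trans[OF norm_cauchy_schwarz] mult_left_mono) auto
  finally have "ereal (\<eta> \<bullet> G q) \<le> ereal (\<xi> \<bullet> G q) + ereal (norm (\<eta> - \<xi>) * B)"
    by simp
  also have "\<dots> \<le> (SUP q\<in>S. ereal (\<xi> \<bullet> G q)) + ereal (norm (\<eta> - \<xi>) * B)"
    using \<open>q \<in> S\<close> by (intro add_right_mono SUP_upper)
  finally show "ereal (\<eta> \<bullet> G q) \<le> (SUP q\<in>S. ereal (\<xi> \<bullet> G q)) + ereal (norm (\<eta> - \<xi>) * B)" .
qed

lemma usc_env_nonneg_limit: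
  fixes G :: "'a::metric_space \<Rightarrow> real^'N"
  assumes "locally_bounded D G" and "p \<in> D"
    and "\<xi>s \<longlonglongrightarrow> \<xi>" and "ps \<longlonglongrightarrow> p"
    and nonneg: "\<And>m. usc_env D G (\<xi>s m) (ps m) \<ge> 0"
  shows "usc_env D G \<xi> p \<ge> 0"
proof -
  obtain e where "e > 0" and "bounded (G ` (D \<inter> ball p e))"
    using assms(1,2) unfolding locally_bounded_def by blast
  then obtain B where B: "\<And>q. q \<in> D \<inter> ball p e \<Longrightarrow> norm (G q) \<le> B"
    unfolding bounded_iff by blast
  show ?thesis unfolding usc_env_def
  proof (rule INF_greatest)
    fix \<epsilon> :: real assume "\<epsilon> \<in> {0<..}"
    define \<delta> where "\<delta> = min \<epsilon> (e/2)"
    have \<delta>: "0 < \<delta>" "\<delta> \<le> \<epsilon>" "\<delta> < e"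
      using \<open>\<epsilon> \<in> {0<..}\<close> \<open>e > 0\<close> by (auto simp: \<delta>_def)
    let ?S = "\<lambda>\<eta> c r. SUP q\<in>D \<inter> cball c r. ereal (\<eta> \<bullet> G q)"
    have "0 \<le> ?S \<xi> p \<delta>"
    proof (rule ereal_le_epsilon2)
      fix d :: real assume "0 < d"
      have "(\<lambda>m. norm (\<xi>s m - \<xi>) * B) \<longlonglongrightarrow> 0"
        using \<open>\<xi>s \<longlonglongrightarrow> \<xi>\<close> by (auto intro!: tendsto_eq_intros)
      then have "\<forall>\<^sub>F m in sequentially. norm (\<xi>s m - \<xi>) * B < d"
        using \<open>0 < d\<close> by (rule order_tendstoD)
      moreover have "\<forall>\<^sub>F m in sequentially. dist (ps m) p < \<delta>/2"
        using \<open>ps \<longlonglongrightarrow> p\<close> \<open>0 < \<delta>\<close> by (intro tendstoD) simp_all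
      ultimately have "\<forall>\<^sub>F m in sequentially. norm (\<xi>s m - \<xi>) * B < d \<and> dist (ps m) p < \<delta>/2"
        by (rule eventually_conj)
      then obtain m where m: "norm (\<xi>s m - \<xi>) * B < d" "dist (ps m) p < \<delta>/2"
        using eventually_sequentially by auto
      have "cball (ps m) (\<delta>/2) \<subseteq> cball p \<delta>"
        using m(2) by metric
      then have ball_sub: "D \<inter> cball (ps m) (\<delta>/2) \<subseteq> D \<inter> cball p \<delta>"
        by blast
      have "0 \<le> ?S (\<xi>s m) (ps m) (\<delta>/2)"
        using nonneg[of m] \<open>0 < \<delta>\<close> unfolding usc_env_def le_INF_iff by auto
      also have "\<dots> \<le> ?S (\<xi>s m) p \<delta>"
        using ball_sub by (rule SUP_subset_mono) simp
      also have "\<dots> \<le> ?S \<xi> p \<delta> + ereal (norm (\<xi>s m - \<xi>) * B)"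
        using \<delta> by (intro SUP_inner_le_perturbed B) (auto simp: dist_commute)
      also have "\<dots> \<le> ?S \<xi> p \<delta> + ereal d"
        using m(1) by (intro add_left_mono) simp
      finally show "0 \<le> ?S \<xi> p \<delta> + ereal d" .
    qed
    also have "\<dots> \<le> ?S \<xi> p \<epsilon>"
      using \<delta> by (intro SUP_subset_mono) auto
    finally show "0 \<le> ?S \<xi> p \<epsilon>" .
  qed
qed

lemma symX_of_J2: "(P, X) \<in> J2 \<Omega> u \<xi> x \<Longrightarrow> symX X"
  by (simp add: J2_def)

lemma J2_subset_J2bar:
  assumes "x \<in> \<Omega>" and "\<xi> \<in> sphere 0 1"
  shows "J2 \<Omega> u \<xi> x \<subseteq> J2bar \<Omega> u \<xi> x"
proof clarify
  fix P X assume "(P, X) \<in> J2 \<Omega> u \<xi> x"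
  with assms show "(P, X) \<in> J2bar \<Omega> u \<xi> x"
    unfolding J2bar_def
    by (auto intro!: exI[of _ "\<lambda>_. \<xi>"] exI[of _ "\<lambda>_. x"] exI[of _ "\<lambda>_. P"] exI[of _ "\<lambda>_. X"])
qed

lemma J1_subset_J1bar:
  assumes "x \<in> \<Omega>" and "\<xi> \<in> sphere 0 1"
  shows "J1 \<Omega> u \<xi> x \<subseteq> J1bar \<Omega> u \<xi> x"
proof
  fix P assume "P \<in> J1 \<Omega> u \<xi> x"
  with assms show "P \<in> J1bar \<Omega> u \<xi> x"
    unfolding J1bar_def by (auto intro!: exI[of _ "\<lambda>_. \<xi>"] exI[of _ "\<lambda>_. x"] exI[of _ "\<lambda>_. P"])
qed

lemma contact_sol2_iff_J2:
  assumes "continuous_on \<Omega> u" and "locally_bounded (D2 \<Omega>) (G2 F)"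
  shows "contact_sol2 \<Omega> u F \<longleftrightarrow> (\<forall>x\<in>\<Omega>. \<forall>\<xi>\<in>sphere 0 1. \<forall>(P, X)\<in>J2 \<Omega> u \<xi> x.
           usc_env (D2 \<Omega>) (G2 F) \<xi> (x, u x, P, X) \<ge> 0)" (is "_ \<longleftrightarrow> ?jets")
proof
  assume "contact_sol2 \<Omega> u F"
  then show ?jets
    unfolding contact_sol2_def using J2_subset_J2bar by fast
next
  assume jets: ?jets
  show "contact_sol2 \<Omega> u F"
    unfolding contact_sol2_def
  proof (intro ballI, clarify)
    fix x \<xi> P X
    assume "x \<in> \<Omega>" and "(P, X) \<in> J2bar \<Omega> u \<xi> x"
    then obtain \<xi>s xs Ps Xs where
      approx: "\<And>m. \<xi>s m \<in> sphere 0 1 \<and> xs m \<in> \<Omega> \<and> (Ps m, Xs m) \<in> J2 \<Omega> u (\<xi>s m) (xs m)"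
      and "\<xi>s \<longlonglongrightarrow> \<xi>" "xs \<longlonglongrightarrow> x" "Ps \<longlonglongrightarrow> P" "Xs \<longlonglongrightarrow> X"
      unfolding J2bar_def by blast
    have "X \<in> {X. symX X}"
      using approx symX_of_J2 by (intro closed_sequentially[OF closed_symX _ \<open>Xs \<longlonglongrightarrow> X\<close>]) blast
    then have "(x, u x, P, X) \<in> D2 \<Omega>"
      using \<open>x \<in> \<Omega>\<close> by (simp add: D2_def)
    moreover have "(\<lambda>m. u (xs m)) \<longlonglongrightarrow> u x"
      using approx by (intro continuous_on_tendsto_compose[OF assms(1) \<open>xs \<longlonglongrightarrow> x\<close> \<open>x \<in> \<Omega>\<close>]) simp
    then have "(\<lambda>m. (xs m, u (xs m), Ps m, Xs m)) \<longlonglongrightarrow> (x, u x, P, X)"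
      using \<open>xs \<longlonglongrightarrow> x\<close> \<open>Ps \<longlonglongrightarrow> P\<close> \<open>Xs \<longlonglongrightarrow> X\<close> by (intro tendsto_Pair)
    moreover have "usc_env (D2 \<Omega>) (G2 F) (\<xi>s m) (xs m, u (xs m), Ps m, Xs m) \<ge> 0" for m
      using jets approx[of m] by fast
    ultimately show "usc_env (D2 \<Omega>) (G2 F) \<xi> (x, u x, P, X) \<ge> 0"
      by (rule usc_env_nonneg_limit[OF assms(2) _ \<open>\<xi>s \<longlonglongrightarrow> \<xi>\<close>])
  qed
qed

lemma contact_sol1_iff_J1:
  assumes "continuous_on \<Omega> u" and "locally_bounded (D1 \<Omega>) (G1 F)"
  shows "contact_sol1 \<Omega> u F \<longleftrightarrow> (\<forall>x\<in>\<Omega>. \<forall>\<xi>\<in>sphere 0 1. \<forall>P\<in>J1 \<Omega> u \<xi> x.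
           usc_env (D1 \<Omega>) (G1 F) \<xi> (x, u x, P) \<ge> 0)" (is "_ \<longleftrightarrow> ?jets")
proof
  assume "contact_sol1 \<Omega> u F"
  then show ?jets
    unfolding contact_sol1_def using J1_subset_J1bar by fast
next
  assume jets: ?jets
  show "contact_sol1 \<Omega> u F"
    unfolding contact_sol1_def
  proof (intro ballI)
    fix x \<xi> P
    assume "x \<in> \<Omega>" and "P \<in> J1bar \<Omega> u \<xi> x"
    then obtain \<xi>s xs Ps where
      approx: "\<And>m. \<xi>s m \<in> sphere 0 1 \<and> xs m \<in> \<Omega> \<and> Ps m \<in> J1 \<Omega> u (\<xi>s m) (xs m)"
      and "\<xi>s \<longlonglongrightarrow> \<xi>" "xs \<longlonglongrightarrow> x" "Ps \<longlonglongrightarrow> P"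
      unfolding J1bar_def by blast
    have "(x, u x, P) \<in> D1 \<Omega>"
      using \<open>x \<in> \<Omega>\<close> by (simp add: D1_def)
    moreover have "(\<lambda>m. u (xs m)) \<longlonglongrightarrow> u x"
      using approx by (intro continuous_on_tendsto_compose[OF assms(1) \<open>xs \<longlonglongrightarrow> x\<close> \<open>x \<in> \<Omega>\<close>]) simp
    then have "(\<lambda>m. (xs m, u (xs m), Ps m)) \<longlonglongrightarrow> (x, u x, P)"
      using \<open>xs \<longlonglongrightarrow> x\<close> \<open>Ps \<longlonglongrightarrow> P\<close> by (intro tendsto_Pair)
    moreover have "usc_env (D1 \<Omega>) (G1 F) (\<xi>s m) (xs m, u (xs m), Ps m) \<ge> 0" for m
      using jets approx[of m] by fast
    ultimately show "usc_env (D1 \<Omega>) (G1 F) \<xi> (x, u x, P) \<ge> 0"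
      by (rule usc_env_nonneg_limit[OF assms(2) _ \<open>\<xi>s \<longlonglongrightarrow> \<xi>\<close>])
  qed
qed

lemma contact_sol2_iff_J2_continuous:
  assumes "continuous_on \<Omega> u" and "locally_bounded (D2 \<Omega>) (G2 F)"
    and "continuous_on (D2 \<Omega>) (G2 F)"
  shows "contact_sol2 \<Omega> u F \<longleftrightarrow> (\<forall>x\<in>\<Omega>. \<forall>\<xi>\<in>sphere 0 1. \<forall>(P, X)\<in>J2 \<Omega> u \<xi> x.
           \<xi> \<bullet> F x (u x) P X \<ge> 0)"
proof -
  have "usc_env (D2 \<Omega>) (G2 F) \<xi> (x, u x, P, X) \<ge> 0 \<longleftrightarrow> \<xi> \<bullet> F x (u x) P X \<ge> 0"
    if "x \<in> \<Omega>" and "(P, X) \<in> J2 \<Omega> u \<xi> x" for x \<xi> P X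
  proof -
    have "(x, u x, P, X) \<in> D2 \<Omega>"
      using that symX_of_J2 by (simp add: D2_def)
    with assms(3) have "usc_env (D2 \<Omega>) (G2 F) \<xi> (x, u x, P, X) = ereal (\<xi> \<bullet> F x (u x) P X)"
      by (simp add: usc_env_eq_of_continuous continuous_on_eq_continuous_within G2_def)
    then show ?thesis
      by simp
  qed
  then show ?thesis
    unfolding contact_sol2_iff_J2[OF assms(1,2)] by fast
qed

lemma contact_sol1_iff_J1_continuous:
  assumes "continuous_on \<Omega> u" and "locally_bounded (D1 \<Omega>) (G1 F)"
    and "continuous_on (D1 \<Omega>) (G1 F)"
  shows "contact_sol1 \<Omega> u F \<longleftrightarrow> (\<forall>x\<in>\<Omega>. \<forall>\<xi>\<in>sphere 0 1. \<forall>P\<in>J1 \<Omega> u \<xi> x.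
           \<xi> \<bullet> F x (u x) P \<ge> 0)"
proof -
  have "usc_env (D1 \<Omega>) (G1 F) \<xi> (x, u x, P) \<ge> 0 \<longleftrightarrow> \<xi> \<bullet> F x (u x) P \<ge> 0"
    if "x \<in> \<Omega>" for x \<xi> P
  proof -
    have "(x, u x, P) \<in> D1 \<Omega>"
      using that by (simp add: D1_def)
    with assms(3) have "usc_env (D1 \<Omega>) (G1 F) \<xi> (x, u x, P) = ereal (\<xi> \<bullet> F x (u x) P)"
      by (simp add: usc_env_eq_of_continuous continuous_on_eq_continuous_within G1_def)
    then show ?thesis
      by simp
  qed
  then show ?thesis
    unfolding contact_sol1_iff_J1[OF assms(1,2)] by fast
qed

theorem lemma12:
  fixes \<Omega> :: "(real^'n) set" and u :: "real^'n \<Rightarrow> real^'N"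
    and F2 :: "real^'n \<Rightarrow> real^'N \<Rightarrow> real^'n^'N \<Rightarrow> real^'n^'n^'N \<Rightarrow> real^'N"
    and F1 :: "real^'n \<Rightarrow> real^'N \<Rightarrow> real^'n^'N \<Rightarrow> real^'N"
  assumes "open \<Omega>" and "continuous_on \<Omega> u"
  shows
   "(locally_bounded (D2 \<Omega>) (G2 F2) \<longrightarrow>
      (contact_sol2 \<Omega> u F2 \<longleftrightarrow> (\<forall>x\<in>\<Omega>. \<forall>\<xi>\<in>sphere 0 1. \<forall>(P, X)\<in>J2 \<Omega> u \<xi> x.
          usc_env (D2 \<Omega>) (G2 F2) \<xi> (x, u x, P, X) \<ge> 0)))
  \<and> (locally_bounded (D1 \<Omega>) (G1 F1) \<longrightarrow>
      (contact_sol1 \<Omega> u F1 \<longleftrightarrow> (\<forall>x\<in>\<Omega>. \<forall>\<xi>\<in>sphere 0 1. \<forall>P\<in>J1 \<Omega> u \<xi> x.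
          usc_env (D1 \<Omega>) (G1 F1) \<xi> (x, u x, P) \<ge> 0)))
  \<and> (locally_bounded (D2 \<Omega>) (G2 F2) \<and> continuous_on (D2 \<Omega>) (G2 F2) \<longrightarrow>
      (contact_sol2 \<Omega> u F2 \<longleftrightarrow> (\<forall>x\<in>\<Omega>. \<forall>\<xi>\<in>sphere 0 1. \<forall>(P, X)\<in>J2 \<Omega> u \<xi> x.
          \<xi> \<bullet> F2 x (u x) P X \<ge> 0)))
  \<and> (locally_bounded (D1 \<Omega>) (G1 F1) \<and> continuous_on (D1 \<Omega>) (G1 F1) \<longrightarrow>
      (contact_sol1 \<Omega> u F1 \<longleftrightarrow> (\<forall>x\<in>\<Omega>. \<forall>\<xi>\<in>sphere 0 1. \<forall>P\<in>J1 \<Omega> u \<xi> x.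
          \<xi> \<bullet> F1 x (u x) P \<ge> 0)))"
  using contact_sol2_iff_J2[OF assms(2)] contact_sol1_iff_J1[OF assms(2)]
    contact_sol2_iff_J2_continuous[OF assms(2)] contact_sol1_iff_J1_continuous[OF assms(2)]
  by simp

end
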